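(* Let $\mathcal S$ be a finite set, let $\kappa$ be a real symmetric $\mathcal S\times\mathcal S$ matrix with nonnegative entries, and let $\mu,c\in(0,\infty)^{\mathcal S}$ with $c_i<\mu_i$ for all $i$. Assume $D_c^{-1}-\kappa$ is positive definite, and set $\Phi=(D_c^{-1}-\kappa)^{-1}$, \[ A_0=(I-\kappa D_c)\,D_{\mu-c}^{-1}\,(I-D_\mu\kappa),\qquad A=\tfrac12(A_0+A_0^T). \] Let $k\in\mathbb N^{\mathcal S}$ and $h>0$ be such that $\Phi-h\,kk^T$ is positive definite, and let $B_k=(\Phi-h\,kk^T)^{-1}$. If \[ h\,k^T(D_\mu^{-1}-\kappa)k<1, \] then $A+B_k$ is positive definite.
   Context: For a vector $x\in\mathbb R^{\mathcal S}$, $D_x$ denotes the diagonal matrix with diagonal entries $x_i$; $\mu-c$ is the componentwise difference; $I$ is the identity matrix. (In the paper $h=h(k)$ is the limiting density of components of type vector $k$, but only $h>0$ and the stated conditions are used.) *)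

theory Defs
  imports "HOL-Analysis.Analysis"
begin

definition pos_def_matrix :: "real^'n^'n \<Rightarrow> bool" where
  "pos_def_matrix M \<longleftrightarrow> transpose M = M \<and> (\<forall>x. x \<noteq> 0 \<longrightarrow> x \<bullet> (M *v x) > 0)"

definition diag_mat :: "real^'n \<Rightarrow> real^'n^'n" where
  "diag_mat x = (\<chi> i j. if i = j then x $ i else 0)"

definition outer :: "real^'n \<Rightarrow> real^'n \<Rightarrow> real^'n^'n" where
  "outer u v = (\<chi> i j. u $ i * v $ j)"

end

theory Submission
  imports Defs
begin

text \<open>With \<open>P = D\<^sub>c\<^sup>-\<^sup>1 - \<kappa>\<close> the matrix \<open>A\<^sub>0\<close> factors as \<open>P D\<^sub>w P - P\<close> with
  \<open>w\<^sub>i = c\<^sub>i \<mu>\<^sub>i / (\<mu>\<^sub>i - c\<^sub>i) > 0\<close>; in particular it is symmetric, so \<open>A = A\<^sub>0\<close>.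
  Since \<open>\<Phi> - h k k\<^sup>T \<le> \<Phi>\<close> in the Loewner order and inversion reverses that order,
  \<open>B\<^sub>k \<ge> \<Phi>\<^sup>-\<^sup>1 = P\<close>. Hence \<open>A + B\<^sub>k \<ge> P D\<^sub>w P\<close>, which is positive definite because \<open>P\<close> is
  invertible.\<close>

lemma matrix_diff_rdistrib: "((A::'a::ring_1^'n^'m) - B) ** C = A ** C - B ** C"
  by (simp add: matrix_matrix_mult_def vec_eq_iff algebra_simps sum_subtractf)

lemma matrix_diff_ldistrib: "(A::'a::ring_1^'n^'m) ** (B - C) = A ** B - A ** C"
  by (simp add: matrix_matrix_mult_def vec_eq_iff algebra_simps sum_subtractf)

lemma transpose_diff: "transpose (A - B) = transpose A - transpose B"
  by (simp add: transpose_def vec_eq_iff)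

lemma diag_mat_mult_vector: "diag_mat a *v v = (\<chi> i. a $ i * v $ i)"
  by (simp add: diag_mat_def matrix_vector_mult_def vec_eq_iff if_distrib[of "\<lambda>t. t * _"] cong: if_cong)

lemma diag_mat_mult_diag_mat: "diag_mat a ** diag_mat b = diag_mat (\<chi> i. a $ i * b $ i)"
  by (simp add: matrix_eq matrix_vector_mul_assoc[symmetric] diag_mat_mult_vector mult.assoc)

lemma diag_mat_diff: "diag_mat a - diag_mat b = diag_mat (a - b)"
  by (simp add: diag_mat_def vec_eq_iff)

lemma mat_eq_diag_mat: "mat r = diag_mat (\<chi> i. r)"
  by (simp add: mat_def diag_mat_def vec_eq_iff)

lemma transpose_diag_mat: "transpose (diag_mat a) = diag_mat a"
  by (simp add: transpose_def diag_mat_def vec_eq_iff)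

lemma matrix_inv_invertible:
  "invertible A \<Longrightarrow> A ** matrix_inv A = mat 1 \<and> matrix_inv A ** A = mat 1"
  unfolding invertible_def matrix_inv_def by (rule someI_ex)

lemma matrix_inv_unique:
  fixes A B :: "'a::field^'n^'n"
  assumes "A ** B = mat 1"
  shows "matrix_inv A = B"
proof -
  have "invertible A"
    using assms invertible_right_inverse by blast
  then have "matrix_inv A ** A = mat 1"
    by (simp add: matrix_inv_invertible)
  then have "matrix_inv A ** (A ** B) = B"
    by (metis matrix_mul_assoc matrix_mul_lid)
  with assms show ?thesis by simp
qed

lemma matrix_inv_matrix_inv:
  fixes A :: "'a::field^'n^'n"
  shows "invertible A \<Longrightarrow> matrix_inv (matrix_inv A) = A"
  by (simp add: matrix_inv_invertible matrix_inv_unique)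

lemma matrix_inv_diag_mat:
  "(\<forall>i. a $ i \<noteq> 0) \<Longrightarrow> matrix_inv (diag_mat a) = diag_mat (\<chi> i. 1 / a $ i)"
  by (rule matrix_inv_unique) (simp add: diag_mat_mult_diag_mat mat_eq_diag_mat)

lemma inner_transpose_mult_vector: "(x::real^'n) \<bullet> (transpose M *v y) = (M *v x) \<bullet> y"
  by (metis dot_lmul_matrix vector_transpose_matrix)

lemma pos_def_matrix_kernel: "pos_def_matrix M \<Longrightarrow> M *v x = 0 \<Longrightarrow> x = 0"
  unfolding pos_def_matrix_def by force

lemma pos_def_matrix_invertible: "pos_def_matrix M \<Longrightarrow> invertible M"
  by (meson invertible_left_inverse matrix_left_invertible_ker pos_def_matrix_kernel)

lemma pos_def_matrix_matrix_inv:
  assumes "pos_def_matrix M"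
  shows "pos_def_matrix (matrix_inv M)"
  unfolding pos_def_matrix_def
proof safe
  have M: "M ** matrix_inv M = mat 1" "matrix_inv M ** M = mat 1"
    using assms pos_def_matrix_invertible matrix_inv_invertible by blast+
  have M_sym: "transpose M = M"
    using assms pos_def_matrix_def by blast
  have "transpose (matrix_inv M) ** M = mat 1"
    by (metis M(1) M_sym matrix_transpose_mul transpose_mat)
  then show "transpose (matrix_inv M) = matrix_inv M"
    by (metis matrix_left_right_inverse matrix_inv_unique)
  fix x :: "real^'a" assume "x \<noteq> 0"
  define y where "y = matrix_inv M *v x"
  have x: "x = M *v y"
    by (simp add: y_def matrix_vector_mul_assoc M)
  with \<open>x \<noteq> 0\<close> have "y \<noteq> 0" by auto
  then have "0 < y \<bullet> (M *v y)"
    using assms pos_def_matrix_def by blast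
  then show "0 < x \<bullet> (matrix_inv M *v x)"
    by (simp add: x[symmetric] y_def[symmetric] inner_commute)
qed

lemma pos_def_matrix_diag_mat:
  assumes "\<forall>i. 0 < w $ i"
  shows "pos_def_matrix (diag_mat w)"
  unfolding pos_def_matrix_def
proof (intro conjI allI impI)
  show "transpose (diag_mat w) = diag_mat w"
    by (rule transpose_diag_mat)
  fix x :: "real^'a" assume "x \<noteq> 0"
  then obtain j where j: "x $ j \<noteq> 0"
    by (metis vec_eq_iff zero_index)
  have "x \<bullet> (diag_mat w *v x) = (\<Sum>i\<in>UNIV. w $ i * (x $ i)\<^sup>2)"
    by (simp add: diag_mat_mult_vector inner_vec_def power2_eq_square algebra_simps)
  also have "\<dots> > 0"
  proof (rule sum_pos2[where i = j])
    show "0 < w $ j * (x $ j)\<^sup>2"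
      using assms j by simp
    show "\<And>i. i \<in> UNIV \<Longrightarrow> 0 \<le> w $ i * (x $ i)\<^sup>2"
      using assms by (simp add: less_imp_le)
  qed auto
  finally show "x \<bullet> (diag_mat w *v x) > 0" .
qed

lemma pos_def_matrix_congruence:
  fixes D :: "real^'m^'m" and P :: "real^'n^'m"
  assumes "pos_def_matrix D" and "\<forall>x. P *v x = 0 \<longrightarrow> x = 0"
  shows "pos_def_matrix (transpose P ** D ** P)"
  unfolding pos_def_matrix_def
proof (intro conjI allI impI)
  show "transpose (transpose P ** D ** P) = transpose P ** D ** P"
    using assms(1) by (simp add: pos_def_matrix_def matrix_transpose_mul matrix_mul_assoc)
  fix x :: "real^'n" assume "x \<noteq> 0"
  then have "P *v x \<noteq> 0"
    using assms(2) by blast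
  then have "0 < (P *v x) \<bullet> (D *v (P *v x))"
    using assms(1) pos_def_matrix_def by blast
  then show "0 < x \<bullet> ((transpose P ** D ** P) *v x)"
    by (simp only: matrix_vector_mul_assoc[symmetric] inner_transpose_mult_vector)
qed

lemma pos_def_matrix_mono:
  assumes "pos_def_matrix M" and "transpose N = N" and "\<forall>x. x \<bullet> (M *v x) \<le> x \<bullet> (N *v x)"
  shows "pos_def_matrix N"
  using assms unfolding pos_def_matrix_def by (meson less_le_trans)

lemma scaleR_half_add_transpose:
  fixes M :: "real^'n^'n"
  shows "transpose M = M \<Longrightarrow> (1/2) *\<^sub>R (M + transpose M) = M"
  by (simp only: scaleR_add_right flip: scaleR_add_left) simp

lemma inner_outer_mult_vector: "x \<bullet> (outer k k *v x) = (k \<bullet> x)\<^sup>2"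
  by (simp add: outer_def matrix_vector_mult_def inner_vec_def power2_eq_square
      sum_distrib_left sum_distrib_right mult_ac)

lemma matrix_inv_antimono:
  fixes S T :: "real^'n^'n"
  assumes "pos_def_matrix S" and "invertible T"
    and le: "\<forall>y. y \<bullet> (S *v y) \<le> y \<bullet> (T *v y)"
  shows "x \<bullet> (matrix_inv T *v x) \<le> x \<bullet> (matrix_inv S *v x)"
proof -
  define u where "u = matrix_inv S *v x"
  define v where "v = matrix_inv T *v x"
  have Su: "S *v u = x"
    using assms(1) pos_def_matrix_invertible matrix_inv_invertible
    by (metis u_def matrix_vector_mul_assoc matrix_vector_mul_lid)
  have Tv: "T *v v = x"
    using assms(2) matrix_inv_invertible
    by (metis v_def matrix_vector_mul_assoc matrix_vector_mul_lid)
  have "transpose S = S"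
    using assms(1) pos_def_matrix_def by blast
  then have Sv: "u \<bullet> (S *v v) = x \<bullet> v"
    by (metis inner_transpose_mult_vector Su)
  \<comment> \<open>expand the nonnegative form \<open>(u - v)\<^sup>T S (u - v)\<close> and bound \<open>v\<^sup>T S v\<close> by \<open>v\<^sup>T T v\<close>\<close>
  have "0 \<le> (u - v) \<bullet> (S *v (u - v))"
    using assms(1) unfolding pos_def_matrix_def by (cases "u = v") (auto intro: less_imp_le)
  also have "\<dots> = u \<bullet> x - 2 * (x \<bullet> v) + v \<bullet> (S *v v)"
    by (simp add: matrix_vector_mult_diff_distrib inner_diff_left inner_diff_right Su Sv inner_commute)
  also have "v \<bullet> (S *v v) \<le> x \<bullet> v"
    using le Tv by (metis inner_commute)
  finally show ?thesis
    by (simp add: u_def v_def inner_commute)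
qed

lemma matrix_inv_rank_one_downdate_ge:
  assumes P: "pos_def_matrix P" and S: "pos_def_matrix (matrix_inv P - h *\<^sub>R outer k k)"
    and "0 \<le> h"
  shows "x \<bullet> (P *v x) \<le> x \<bullet> (matrix_inv (matrix_inv P - h *\<^sub>R outer k k) *v x)"
proof -
  have "y \<bullet> ((matrix_inv P - h *\<^sub>R outer k k) *v y) \<le> y \<bullet> (matrix_inv P *v y)" for y
    using \<open>0 \<le> h\<close> by (simp add: matrix_vector_mult_diff_rdistrib inner_diff_right
        inner_outer_mult_vector flip: scaleR_matrix_vector_assoc)
  then have "x \<bullet> (matrix_inv (matrix_inv P) *v x)
      \<le> x \<bullet> (matrix_inv (matrix_inv P - h *\<^sub>R outer k k) *v x)"
    using P by (intro matrix_inv_antimono S pos_def_matrix_invertible pos_def_matrix_matrix_inv) auto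
  then show ?thesis
    using P by (simp add: matrix_inv_matrix_inv pos_def_matrix_invertible)
qed

lemma sandwich_factorization:
  fixes \<kappa> :: "real^'n^'n" and \<mu> c :: "real^'n"
  assumes c_nz: "\<forall>i. c $ i \<noteq> 0" and mu_ne_c: "\<forall>i. \<mu> $ i \<noteq> c $ i"
  defines "P \<equiv> matrix_inv (diag_mat c) - \<kappa>"
  shows "(mat 1 - \<kappa> ** diag_mat c) ** matrix_inv (diag_mat (\<mu> - c)) ** (mat 1 - diag_mat \<mu> ** \<kappa>)
    = P ** diag_mat (\<chi> i. c $ i * \<mu> $ i / (\<mu> $ i - c $ i)) ** P - P"
proof -
  define C' where "C' = diag_mat (\<chi> i. 1 / c $ i)"
  define E where "E = diag_mat (\<chi> i. 1 / (\<mu> $ i - c $ i))"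
  have C': "matrix_inv (diag_mat c) = C'"
    unfolding C'_def using c_nz by (rule matrix_inv_diag_mat)
  have E: "matrix_inv (diag_mat (\<mu> - c)) = E"
    unfolding E_def using mu_ne_c by (subst matrix_inv_diag_mat) auto
  have left: "mat 1 - \<kappa> ** diag_mat c = P ** diag_mat c"
    using c_nz by (simp add: P_def C' C'_def matrix_diff_rdistrib diag_mat_mult_diag_mat mat_eq_diag_mat)
  have right: "mat 1 - diag_mat \<mu> ** \<kappa> = diag_mat \<mu> ** P - (diag_mat \<mu> ** C' - mat 1)"
    by (simp add: P_def C' matrix_diff_ldistrib)
  have middle: "diag_mat c ** E ** diag_mat \<mu> = diag_mat (\<chi> i. c $ i * \<mu> $ i / (\<mu> $ i - c $ i))"
    by (simp add: E_def diag_mat_mult_diag_mat)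
  have correction: "diag_mat c ** E ** (diag_mat \<mu> ** C' - mat 1) = mat 1"
    using c_nz mu_ne_c
    by (simp add: E_def C'_def mat_eq_diag_mat diag_mat_mult_diag_mat diag_mat_diff vec_eq_iff field_simps)
  have "(mat 1 - \<kappa> ** diag_mat c) ** E ** (mat 1 - diag_mat \<mu> ** \<kappa>)
    = P ** (diag_mat c ** E ** diag_mat \<mu>) ** P - P ** (diag_mat c ** E ** (diag_mat \<mu> ** C' - mat 1))"
    unfolding left right by (simp add: matrix_diff_ldistrib matrix_mul_assoc)
  then show ?thesis
    by (simp only: E middle correction matrix_mul_rid)
qed

theorem mainTheorem3:
  fixes \<kappa> :: "real^'S^'S" and \<mu> c :: "real^'S" and k :: "real^'S" and h :: real
  assumes kappa_sym: "transpose \<kappa> = \<kappa>"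
    and kappa_nonneg: "\<forall>i j. \<kappa> $ i $ j \<ge> 0"
    and c_pos: "\<forall>i. c $ i > 0"
    and mu_pos: "\<forall>i. \<mu> $ i > 0"
    and c_lt_mu: "\<forall>i. c $ i < \<mu> $ i"
    and pd1: "pos_def_matrix (matrix_inv (diag_mat c) - \<kappa>)"
    and k_nat: "\<forall>i. k $ i \<in> \<nat>"
    and h_pos: "h > 0"
    and pd2: "pos_def_matrix (matrix_inv (matrix_inv (diag_mat c) - \<kappa>) - h *\<^sub>R outer k k)"
    and cond: "h * (k \<bullet> ((matrix_inv (diag_mat \<mu>) - \<kappa>) *v k)) < 1"
  shows "let \<Phi> = matrix_inv (matrix_inv (diag_mat c) - \<kappa>);
             A0 = (mat 1 - \<kappa> ** diag_mat c) ** matrix_inv (diag_mat (\<mu> - c))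
                  ** (mat 1 - diag_mat \<mu> ** \<kappa>);
             A = (1/2) *\<^sub>R (A0 + transpose A0);
             B = matrix_inv (\<Phi> - h *\<^sub>R outer k k)
         in pos_def_matrix (A + B)"
proof -
  define P where "P = matrix_inv (diag_mat c) - \<kappa>"
  define W where "W = diag_mat (\<chi> i. c $ i * \<mu> $ i / (\<mu> $ i - c $ i))"
  define B where "B = matrix_inv (matrix_inv P - h *\<^sub>R outer k k)"
  have P_sym: "transpose P = P"
    using pd1 by (simp add: P_def pos_def_matrix_def)
  have A0: "(mat 1 - \<kappa> ** diag_mat c) ** matrix_inv (diag_mat (\<mu> - c)) ** (mat 1 - diag_mat \<mu> ** \<kappa>)
      = P ** W ** P - P"
    unfolding P_def W_def using c_pos c_lt_mu
    by (intro sandwich_factorization) (auto simp: less_imp_neq[symmetric] less_imp_neq)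
  have A0_sym: "transpose (P ** W ** P - P) = P ** W ** P - P"
    by (simp add: transpose_diff matrix_transpose_mul matrix_mul_assoc P_sym W_def transpose_diag_mat)
  have PWP: "pos_def_matrix (transpose P ** W ** P)"
    using c_pos mu_pos c_lt_mu pd1 unfolding W_def P_def
    by (intro pos_def_matrix_congruence pos_def_matrix_diag_mat) (auto intro: pos_def_matrix_kernel)
  have B_ge: "x \<bullet> (P *v x) \<le> x \<bullet> (B *v x)" for x
    using pd1 pd2 h_pos unfolding P_def B_def by (intro matrix_inv_rank_one_downdate_ge) auto
  have B_sym: "transpose B = B"
    using pd2 pos_def_matrix_matrix_inv unfolding B_def P_def pos_def_matrix_def by blast
  have "pos_def_matrix (P ** W ** P - P + B)"
    using PWP
  proof (rule pos_def_matrix_mono)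
    show "transpose (P ** W ** P - P + B) = P ** W ** P - P + B"
      using A0_sym B_sym by (simp add: transpose_def vec_eq_iff)
    show "\<forall>x. x \<bullet> ((transpose P ** W ** P) *v x) \<le> x \<bullet> ((P ** W ** P - P + B) *v x)"
      using B_ge by (simp add: P_sym matrix_vector_mult_add_rdistrib matrix_vector_mult_diff_rdistrib
          inner_add_right inner_diff_right)
  qed
  then show ?thesis
    unfolding Let_def A0 scaleR_half_add_transpose[OF A0_sym] by (simp add: P_def B_def)
qed

end
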